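(* Let $K\ge 2$ and $0\le e_1\le\dots\le e_K<\infty$. For nonempty $I\subseteq\{1,\dots,K\}$ write $A(I):=\frac1{|I|}\sum_{i\in I}e_i$. For nonempty $R\subseteq\{1,\dots,K\}$ and $j\in\{1,\dots,|R|\}$ let \[ \mathrm{AV}^R(j):=\min_{I\subseteq\{1,\dots,K\}:\ |R\setminus I|<j}A(I), \] and let $R_j$ denote $R$ with its $j-1$ largest elements removed. Then \[ \mathrm{AV}^R(j)=\min_{0\le i\le K}A\bigl(R_j\cup\{1,\dots,i\}\bigr), \] where $\{1,\dots,0\}:=\emptyset$. In particular, for $r\in\{1,\dots,K\}$, $R=\{K-r+1,\dots,K\}$ and $j\in\{1,\dots,r\}$, \[ \mathrm{AV}^{R}(j)=\min_{0\le i\le K-r}\frac{s_i+\sigma_j}{i+r-j+1},\qquad s_i:=e_1+\dots+e_i,\ \ \sigma_j:=e_{K-r+1}+\dots+e_{K-j+1}. \]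
   Context: Here "the largest elements" of $R$ are its largest indices, which correspond to the largest values since $e_1\le\dots\le e_K$; $s_0:=0$. *)

theory Defs
  imports Main "HOL.Real"
begin

definition avg :: "(nat \<Rightarrow> real) \<Rightarrow> nat set \<Rightarrow> real" where
  "avg e I = (\<Sum>i\<in>I. e i) / real (card I)"

definition AV :: "nat \<Rightarrow> (nat \<Rightarrow> real) \<Rightarrow> nat set \<Rightarrow> nat \<Rightarrow> real" where
  "AV K e R j = Min {avg e I | I. I \<subseteq> {1..K} \<and> card (R - I) < j}"

text \<open>R with its m largest elements removed: keep x iff at least m elements
  of R are larger than x.\<close>
definition remove_largest :: "nat set \<Rightarrow> nat \<Rightarrow> nat set" where
  "remove_largest R m = {x \<in> R. m \<le> card {y \<in> R. x < y}}"

end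

theory Submission
  imports Defs
begin

text \<open>
  Call \<open>I\<close> admissible if \<open>|R - I| < j\<close>. An admissible \<open>I\<close> can be improved in two
  exchange steps that keep \<open>|I|\<close> and never increase \<open>\<Sum>\<^sub>I e\<close>, hence never increase
  \<open>A(I)\<close>: first replace \<open>I \<inter> R\<close> by the same number of smallest elements of \<open>R\<close>,
  which contain \<open>R\<^sub>j\<close> because \<open>|I \<inter> R| \<ge> |R| - j + 1 = |R\<^sub>j|\<close>; then replace the part
  outside \<open>R\<^sub>j\<close> by the same number of smallest indices outside \<open>R\<^sub>j\<close>. The result is
  \<open>R\<^sub>j \<union> {1..i}\<close>, and all these sets are admissible. For \<open>R = {K-r+1..K}\<close> the set
  \<open>R\<^sub>j \<union> {1..i}\<close> is a disjoint union for \<open>i \<le> K - r\<close>, while for larger \<open>i\<close> it is a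
  prefix \<open>{1..i'}\<close> with \<open>i' \<ge> K-j+1\<close>, whose average is at least that of \<open>{1..K-j+1}\<close>.
\<close>

lemma Min_eq_Min_subset:
  fixes X :: "'a::linorder set"
  assumes "finite X" "Y \<subseteq> X" "Y \<noteq> {}" "\<forall>x\<in>X. \<exists>y\<in>Y. y \<le> x"
  shows "Min X = Min Y"
proof (rule antisym)
  have "finite Y" using assms(1,2) finite_subset by blast
  show "Min X \<le> Min Y" using assms by (intro Min_antimono) auto
  have "Min X \<in> X" using assms by (intro Min_in) auto
  then obtain y where "y \<in> Y" "y \<le> Min X" using assms(4) by blast
  then show "Min Y \<le> Min X" using \<open>finite Y\<close> by (meson Min_le order_trans)
qed

lemma sum_le_of_downward_closed:
  fixes S :: "'a::linorder set" and e :: "'a \<Rightarrow> 'b::linordered_semiring_1"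
  assumes fin: "finite S" and mono: "mono_on S e"
    and TS: "T \<subseteq> S" and JS: "J \<subseteq> S" and card_eq: "card T = card J"
    and down: "\<forall>x\<in>T. \<forall>y\<in>S. y < x \<longrightarrow> y \<in> T"
  shows "sum e T \<le> sum e J"
proof -
  have finT: "finite T" and finJ: "finite J" using fin TS JS finite_subset by auto
  define A where "A = T - J"
  define B where "B = J - T"
  have finA: "finite A" and finB: "finite B" using finT finJ unfolding A_def B_def by auto
  have "card T = card (T \<inter> J) + card A" "card J = card (J \<inter> T) + card B"
    unfolding A_def B_def using card_Int_Diff[OF finT] card_Int_Diff[OF finJ] by blast+
  then have card_AB: "card A = card B" using card_eq by (simp add: Int_commute)
  have below: "e a \<le> e b" if "a \<in> A" "b \<in> B" for a b
  proof -
    have "a \<le> b" using that down JS unfolding A_def B_def by (meson DiffD1 DiffD2 not_le subsetD)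
    then show ?thesis using mono that TS JS unfolding A_def B_def by (auto intro: mono_onD)
  qed
  have "sum e A \<le> sum e B"
  proof (cases "A = {}")
    case True
    then show ?thesis using card_AB finB by simp
  next
    case False
    define M where "M = Max (e ` A)"
    have "M \<in> e ` A" unfolding M_def using False finA by (intro Max_in) auto
    have "sum e A \<le> of_nat (card A) * M"
      using finA by (intro sum_bounded_above) (auto simp: M_def)
    also have "\<dots> \<le> sum e B"
      using card_AB \<open>M \<in> e ` A\<close> below by (auto intro!: sum_bounded_below)
    finally show ?thesis .
  qed
  moreover have "sum e T = sum e (T \<inter> J) + sum e A" "sum e J = sum e (J \<inter> T) + sum e B"
    unfolding A_def B_def using sum.Int_Diff[OF finT] sum.Int_Diff[OF finJ] by blast+
  ultimately show ?thesis by (simp add: Int_commute add_left_mono)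
qed

lemma remove_largest_subset: "remove_largest R m \<subseteq> R"
  unfolding remove_largest_def by auto

lemma remove_largest_antimono: "m \<le> m' \<Longrightarrow> remove_largest R m' \<subseteq> remove_largest R m"
  unfolding remove_largest_def by auto

lemma remove_largest_downward_closed:
  assumes "finite R" "x \<in> remove_largest R m" "y \<in> R" "y < x"
  shows "y \<in> remove_largest R m"
proof -
  have "card {z\<in>R. x < z} \<le> card {z\<in>R. y < z}"
    using assms(1,4) by (intro card_mono) auto
  then show ?thesis using assms(2,3) unfolding remove_largest_def by auto
qed

lemma card_remove_largest:
  assumes fin: "finite R" and "m \<le> card R"
  shows "card (remove_largest R m) = card R - m"
proof -
  define c where "c x = card {y\<in>R. x < y}" for x
  have less: "c x' < c x" if "x' \<in> R" "x < x'" for x x'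
    unfolding c_def using fin that by (intro psubset_card_mono) auto
  have inj: "inj_on c R"
  proof (rule inj_onI, rule ccontr)
    fix x x' assume "x \<in> R" "x' \<in> R" "c x = c x'" "x \<noteq> x'"
    then show False using less[of x' x] less[of x x'] by (cases "x < x'") auto
  qed
  have "c x < card R" if "x \<in> R" for x
    unfolding c_def using fin that by (intro psubset_card_mono) auto
  then have range: "c ` R = {..<card R}"
    using inj by (intro card_subset_eq) (auto simp: card_image)
  have "c ` {x\<in>R. m \<le> c x} = {m..<card R}"
  proof
    show "{m..<card R} \<subseteq> c ` {x\<in>R. m \<le> c x}"
    proof
      fix k assume k: "k \<in> {m..<card R}"
      then obtain x where "x \<in> R" "k = c x" using range by (metis atLeastLessThan_iff imageE lessThan_iff)
      then show "k \<in> c ` {x\<in>R. m \<le> c x}" using k by auto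
    qed
  qed (use range in auto)
  moreover have "card (c ` {x\<in>R. m \<le> c x}) = card {x\<in>R. m \<le> c x}"
    by (rule card_image, rule inj_on_subset[OF inj]) auto
  ultimately show ?thesis unfolding remove_largest_def c_def by simp
qed

lemma sum_remove_largest_le:
  fixes e :: "nat \<Rightarrow> 'b::linordered_semiring_1"
  assumes "finite S" "mono_on S e" "J \<subseteq> S"
  shows "sum e (remove_largest S (card S - card J)) \<le> sum e J"
    and "card (remove_largest S (card S - card J)) = card J"
proof -
  show card_eq: "card (remove_largest S (card S - card J)) = card J"
    using assms by (simp add: card_remove_largest card_mono)
  show "sum e (remove_largest S (card S - card J)) \<le> sum e J"
    using assms card_eq remove_largest_downward_closed[OF assms(1)]
    by (intro sum_le_of_downward_closed[OF assms(1,2) remove_largest_subset]) auto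
qed

lemma exchange_into_remove_largest:
  fixes e :: "nat \<Rightarrow> 'b::linordered_semiring_1"
  assumes finR: "finite R" and mono: "mono_on R e" and finI: "finite I"
    and "card (R - I) \<le> m"
  shows "\<exists>I'. remove_largest R m \<subseteq> I' \<and> I' \<subseteq> R \<union> I \<and> card I' = card I \<and> sum e I' \<le> sum e I"
proof -
  define G where "G = I \<inter> R"
  define T where "T = remove_largest R (card R - card G)"
  have GR: "G \<subseteq> R" unfolding G_def by blast
  have "card R = card G + card (R - I)"
    using card_Int_Diff[OF finR, of I] unfolding G_def by (simp add: Int_commute)
  then have "remove_largest R m \<subseteq> T"
    unfolding T_def using assms(4) by (intro remove_largest_antimono) linarith
  have TR: "T \<subseteq> R" unfolding T_def by (rule remove_largest_subset)
  have card_T: "card T = card G" and sum_T: "sum e T \<le> sum e G"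
    unfolding T_def using sum_remove_largest_le[OF finR mono GR] by simp_all
  have fin: "finite T" "finite G" "finite (I - R)"
    using TR GR finR finI by (auto intro: finite_subset)
  have disj: "T \<inter> (I - R) = {}" "G \<inter> (I - R) = {}" using TR unfolding G_def by blast+
  have splitI: "G \<union> (I - R) = I" unfolding G_def by blast
  have "card (T \<union> (I - R)) = card I"
    using card_Un_disjoint[OF fin(1,3) disj(1)] card_Un_disjoint[OF fin(2,3) disj(2)] card_T splitI
    by simp
  moreover have "sum e (T \<union> (I - R)) \<le> sum e I"
    using sum.union_disjoint[OF fin(1,3) disj(1), where g = e]
      sum.union_disjoint[OF fin(2,3) disj(2), where g = e] sum_T splitI
    by simp
  moreover have "remove_largest R m \<subseteq> T \<union> (I - R)" "T \<union> (I - R) \<subseteq> R \<union> I"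
    using \<open>remove_largest R m \<subseteq> T\<close> TR by auto
  ultimately show ?thesis by (intro exI[of _ "T \<union> (I - R)"] conjI)
qed

lemma Un_remove_largest_complement_eq_prefix:
  assumes "F \<subseteq> {1..K}"
  shows "\<exists>i\<le>K. F \<union> remove_largest ({1..K} - F) m = F \<union> {1..i}"
proof (cases "remove_largest ({1..K} - F) m = {}")
  case True
  then show ?thesis by (intro exI[of _ 0]) simp
next
  case False
  define S where "S = {1..K} - F"
  define T where "T = remove_largest S m"
  have TS: "T \<subseteq> S" unfolding T_def by (rule remove_largest_subset)
  have finT: "finite T" using TS unfolding S_def by (auto intro: finite_subset)
  have "Max T \<in> T" using False finT unfolding T_def S_def by (intro Max_in) auto
  then have "Max T \<le> K" using TS unfolding S_def by auto
  have "T \<subseteq> {1..Max T}" using finT TS unfolding S_def by auto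
  moreover have "x \<in> T" if "x \<in> {1..Max T}" "x \<notin> F" for x
  proof (cases "x = Max T")
    case False
    then have "x < Max T" using that by simp
    moreover have "x \<in> S" using that \<open>Max T \<le> K\<close> unfolding S_def by auto
    ultimately show ?thesis
      using \<open>Max T \<in> T\<close> remove_largest_downward_closed[of S] unfolding T_def S_def by auto
  qed (use \<open>Max T \<in> T\<close> in simp)
  ultimately have "F \<union> T = F \<union> {1..Max T}" by blast
  then show ?thesis using \<open>Max T \<le> K\<close> unfolding T_def S_def by blast
qed

lemma exchange_into_prefix:
  fixes e :: "nat \<Rightarrow> 'b::linordered_semiring_1"
  assumes mono: "mono_on {1..K} e" and FI: "F \<subseteq> I" and IK: "I \<subseteq> {1..K}"
  shows "\<exists>i\<le>K. card (F \<union> {1..i}) = card I \<and> sum e (F \<union> {1..i}) \<le> sum e I"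
proof -
  define S where "S = {1..K} - F"
  define J where "J = I - F"
  define T where "T = remove_largest S (card S - card J)"
  have JS: "J \<subseteq> S" unfolding J_def S_def using IK by blast
  have SK: "S \<subseteq> {1..K}" and finS: "finite S" unfolding S_def by auto
  have card_T: "card T = card J" and sum_T: "sum e T \<le> sum e J"
    unfolding T_def using sum_remove_largest_le[OF finS mono_on_subset[OF mono SK] JS] by simp_all
  have "F \<subseteq> {1..K}" using FI IK by blast
  then obtain i where "i \<le> K" and prefix: "F \<union> T = F \<union> {1..i}"
    using Un_remove_largest_complement_eq_prefix unfolding T_def S_def by blast
  have TS: "T \<subseteq> S" unfolding T_def by (rule remove_largest_subset)
  have fin: "finite F" "finite T" "finite J"
    using FI IK JS TS unfolding S_def by (auto intro: finite_subset)
  have disj: "F \<inter> T = {}" "F \<inter> J = {}" using TS unfolding S_def J_def by blast+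
  have splitI: "F \<union> J = I" unfolding J_def using FI by blast
  have "card (F \<union> T) = card I"
    using card_Un_disjoint[OF fin(1,2) disj(1)] card_Un_disjoint[OF fin(1,3) disj(2)] card_T splitI
    by simp
  moreover have "sum e (F \<union> T) \<le> sum e I"
    using sum.union_disjoint[OF fin(1,2) disj(1), where g = e]
      sum.union_disjoint[OF fin(1,3) disj(2), where g = e] sum_T splitI
    by simp
  ultimately show ?thesis using \<open>i \<le> K\<close> unfolding prefix by blast
qed

lemma AV_eq_Min_remove_largest_Un_prefix:
  fixes e :: "nat \<Rightarrow> real"
  assumes mono: "mono_on {1..K} e" and RK: "R \<subseteq> {1..K}" and j: "1 \<le> j" "j \<le> card R"
  shows "AV K e R j = Min ((\<lambda>i. avg e (remove_largest R (j - 1) \<union> {1..i})) ` {0..K})"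
proof -
  define F where "F = remove_largest R (j - 1)"
  define X where "X = {avg e I | I. I \<subseteq> {1..K} \<and> card (R - I) < j}"
  define Y where "Y = (\<lambda>i. avg e (F \<union> {1..i})) ` {0..K}"
  have finR: "finite R" using RK by (rule finite_subset) simp
  have FR: "F \<subseteq> R" unfolding F_def by (rule remove_largest_subset)
  have "card (R - F) = card R - card F"
    using FR finR by (meson card_Diff_subset finite_subset)
  also have "\<dots> = j - 1" using card_remove_largest[OF finR, of "j - 1"] j unfolding F_def by simp
  finally have card_RF: "card (R - F) = j - 1" .
  have "avg e (F \<union> {1..i}) \<in> X" if "i \<le> K" for i
  proof -
    have "card (R - (F \<union> {1..i})) \<le> card (R - F)" using finR by (intro card_mono) auto
    then have "card (R - (F \<union> {1..i})) < j" using card_RF j by linarith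
    moreover have "F \<union> {1..i} \<subseteq> {1..K}" using FR RK that by auto
    ultimately show ?thesis unfolding X_def by auto
  qed
  then have "Y \<subseteq> X" unfolding Y_def by auto
  moreover have "finite X"
  proof (rule finite_subset)
    show "X \<subseteq> avg e ` Pow {1..K}" unfolding X_def by auto
  qed simp
  moreover have "\<exists>y\<in>Y. y \<le> x" if "x \<in> X" for x
  proof -
    obtain I where I: "I \<subseteq> {1..K}" "card (R - I) < j" "x = avg e I"
      using \<open>x \<in> X\<close> unfolding X_def by blast
    have "finite I" using I(1) by (rule finite_subset) simp
    moreover have "card (R - I) \<le> j - 1" using I(2) by linarith
    ultimately have "\<exists>I'. F \<subseteq> I' \<and> I' \<subseteq> R \<union> I \<and> card I' = card I \<and> sum e I' \<le> sum e I"
      unfolding F_def by (rule exchange_into_remove_largest[OF finR mono_on_subset[OF mono RK]])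
    then obtain I' where I': "F \<subseteq> I'" "I' \<subseteq> R \<union> I" "card I' = card I" "sum e I' \<le> sum e I"
      by auto
    have "I' \<subseteq> {1..K}" using I'(2) RK I(1) by auto
    then obtain i where "i \<le> K" "card (F \<union> {1..i}) = card I'" "sum e (F \<union> {1..i}) \<le> sum e I'"
      using exchange_into_prefix[OF mono I'(1)] by auto
    with I' have "card (F \<union> {1..i}) = card I" "sum e (F \<union> {1..i}) \<le> sum e I" by simp_all
    then have "avg e (F \<union> {1..i}) \<le> x"
      unfolding I(3) avg_def by (simp add: divide_right_mono)
    moreover have "avg e (F \<union> {1..i}) \<in> Y" unfolding Y_def using \<open>i \<le> K\<close> by simp
    ultimately show ?thesis by blast
  qed
  moreover have "Y \<noteq> {}" unfolding Y_def by simp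
  ultimately have "Min X = Min Y" by (intro Min_eq_Min_subset) auto
  then show ?thesis unfolding AV_def X_def Y_def F_def .
qed

lemma remove_largest_atLeastAtMost:
  assumes "m \<le> b"
  shows "remove_largest {a..b} m = {a..b - m}"
proof -
  have "card {y \<in> {a..b}. x < y} = b - x" if "x \<in> {a..b}" for x :: nat
  proof -
    have "{y \<in> {a..b}. x < y} = {Suc x..b}" using that by auto
    then show ?thesis by simp
  qed
  then show ?thesis unfolding remove_largest_def using assms by auto
qed

lemma avg_prefix_mono:
  fixes e :: "nat \<Rightarrow> real"
  assumes mono: "mono_on {1..K} e" and "1 \<le> a" "a \<le> b" "b \<le> K"
  shows "avg e {1..a} \<le> avg e {1..b}"
  using assms(3,4)
proof (induction b rule: dec_induct)
  case (step n)
  have "sum e {1..n} \<le> of_nat (card {1..n}) * e (Suc n)"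
    using step mono by (intro sum_bounded_above) (auto intro: mono_onD)
  then have "avg e {1..n} \<le> avg e {1..Suc n}"
    using step \<open>1 \<le> a\<close> unfolding avg_def by (simp add: field_simps)
  then show ?case using step by simp
qed simp

lemma AV_atLeastAtMost_top:
  fixes e :: "nat \<Rightarrow> real"
  assumes mono: "mono_on {1..K} e" and rj: "1 \<le> j" "j \<le> r" "r \<le> K"
  shows "AV K e {K - r + 1..K} j =
    Min ((\<lambda>i. ((\<Sum>k=1..i. e k) + (\<Sum>k=K-r+1..K-j+1. e k)) / (real i + real r - real j + 1))
      ` {0..K - r})"
proof -
  define P where "P = {K - r + 1..K - j + 1}"
  define f where "f i = avg e (P \<union> {1..i})" for i
  have "remove_largest {K - r + 1..K} (j - 1) = P"
    unfolding P_def using rj by (simp add: remove_largest_atLeastAtMost Suc_diff_le)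
  then have AV_f: "AV K e {K - r + 1..K} j = Min (f ` {0..K})"
    using AV_eq_Min_remove_largest_Un_prefix[OF mono, of "{K - r + 1..K}" j] rj unfolding f_def by simp
  have f_tail: "f (K - r) \<le> f i" if "K - r < i" "i \<le> K" for i
  proof -
    have "P \<union> {1..K - r} = {1..K - j + 1}" "P \<union> {1..i} = {1..max i (K - j + 1)}"
      unfolding P_def using rj that by auto
    then show ?thesis
      unfolding f_def using avg_prefix_mono[OF mono, of "K - j + 1" "max i (K - j + 1)"] rj that by simp
  qed
  have "Min (f ` {0..K}) = Min (f ` {0..K - r})"
  proof (rule Min_eq_Min_subset)
    show "\<forall>x\<in>f ` {0..K}. \<exists>y\<in>f ` {0..K - r}. y \<le> x"
    proof
      fix x assume "x \<in> f ` {0..K}"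
      then obtain i where "i \<le> K" "x = f i" by auto
      show "\<exists>y\<in>f ` {0..K - r}. y \<le> x"
      proof (cases "i \<le> K - r")
        case False
        then show ?thesis using f_tail[of i] \<open>i \<le> K\<close> \<open>x = f i\<close>
          by (intro bexI[of _ "f (K - r)"]) auto
      qed (use \<open>x = f i\<close> in auto)
    qed
  qed auto
  also have "f i = ((\<Sum>k=1..i. e k) + (\<Sum>k=K-r+1..K-j+1. e k)) / (real i + real r - real j + 1)"
    if "i \<in> {0..K - r}" for i
  proof -
    have disj: "{1..i} \<inter> P = {}" using that unfolding P_def by auto
    have "card (P \<union> {1..i}) = i + (r - j + 1)"
      using card_Un_disjoint[of "{1..i}" P] disj rj unfolding P_def by (simp add: Un_commute)
    moreover have "sum e (P \<union> {1..i}) = sum e {1..i} + sum e P"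
      using sum.union_disjoint[of "{1..i}" P e] disj unfolding P_def by (simp add: Un_commute)
    ultimately show ?thesis unfolding f_def avg_def P_def using rj by (simp add: of_nat_diff)
  qed
  then have "f ` {0..K - r} =
      (\<lambda>i. ((\<Sum>k=1..i. e k) + (\<Sum>k=K-r+1..K-j+1. e k)) / (real i + real r - real j + 1)) ` {0..K - r}"
    by (intro image_cong) auto
  finally show ?thesis using AV_f by simp
qed

theorem mainTheorem4:
  fixes K :: nat and e :: "nat \<Rightarrow> real"
  assumes "K \<ge> 2"
    and "\<forall>i\<in>{1..K}. 0 \<le> e i"
    and "\<forall>i j. 1 \<le> i \<longrightarrow> i \<le> j \<longrightarrow> j \<le> K \<longrightarrow> e i \<le> e j"
  shows "(\<forall>R j. R \<noteq> {} \<and> R \<subseteq> {1..K} \<and> 1 \<le> j \<and> j \<le> card R \<longrightarrow>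
           AV K e R j = Min ((\<lambda>i. avg e (remove_largest R (j - 1) \<union> {1..i})) ` {0..K})) \<and>
         (\<forall>r j. 1 \<le> r \<and> r \<le> K \<and> 1 \<le> j \<and> j \<le> r \<longrightarrow>
           AV K e {K - r + 1..K} j =
             Min ((\<lambda>i. ((\<Sum>k=1..i. e k) + (\<Sum>k=K-r+1..K-j+1. e k))
                        / (real i + real r - real j + 1)) ` {0..K - r}))"
proof -
  have mono: "mono_on {1..K} e" using assms(3) by (auto intro: mono_onI)
  show ?thesis
    using AV_eq_Min_remove_largest_Un_prefix[OF mono] AV_atLeastAtMost_top[OF mono] by blast
qed

end
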